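(* Let $A\in\mathbb{R}^{n\times n}$, $B\in\mathbb{R}^{n\times m}$ with $(A,B)$ controllable, and let $T>0$. Then the pair $\big(A_{d,T},\,[B_{d,T}\ \ B_{i,T}]\big)$ is controllable if and only if $$\ker\begin{bmatrix} A_{d,T}^\top-e^{\mu T}I\\ (\widetilde{A}_{T}B)^\top\\ B^\top\end{bmatrix}=\{0\}\quad(\text{kernel taken in }\mathbb{C}^n)$$ for every $\mu$ in the set $\{\lambda\in\sigma(A)\ :\ \exists\,(\ell,\gamma)\in\mathbb{Z}\times(\sigma(A)\setminus\{\lambda\})\text{ such that }(\lambda-\gamma)T=2i\pi\ell\}$. (If this set is empty, the pair is controllable.)
   Context: For $T>0$ define $\widetilde{A}_T:=\int_0^T e^{A\tau}\,d\tau$, $A_{d,T}:=e^{AT}$, $B_{d,T}:=\widetilde{A}_T B$, $B_{i,T}:=A_{d,T}B$. These are the matrices of the exact discretization $x_{k+1}=A_{d,T}x_k+B_{d,T}u_{c_k}+B_{i,T}u_{i_k}$ of $\dot x=Ax+Bu$ under the input $u(t)=u_{c_k}+\delta(t-kT)u_{i_k}$ on $[kT,(k+1)T)$. $\sigma(A)$ denotes the spectrum of $A$ and $I$ the identity matrix. *)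

theory Defs
  imports "HOL-Analysis.Analysis"
begin

text \<open>Matrices are HOL-Analysis Cartesian matrices: a real n x m matrix has type
  real^'m^'n (rows indexed by 'n). Note that the built-in multiplication on vectors
  is componentwise, so powers and the exponential of a matrix are defined here using
  the matrix product.\<close>

primrec matpow :: "real^'n^'n \<Rightarrow> nat \<Rightarrow> real^'n^'n" where
  "matpow A 0 = mat 1"
| "matpow A (Suc k) = A ** matpow A k"

definition mexp :: "real^'n^'n \<Rightarrow> real^'n^'n" where
  "mexp M = (\<Sum>k. (1 / fact k) *\<^sub>R matpow M k)"

definition Atil :: "real^'n^'n \<Rightarrow> real \<Rightarrow> real^'n^'n" where
  "Atil A T = integral {0..T} (\<lambda>\<tau>. mexp (\<tau> *\<^sub>R A))"

definition Ad :: "real^'n^'n \<Rightarrow> real \<Rightarrow> real^'n^'n" where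
  "Ad A T = mexp (T *\<^sub>R A)"

definition Bd :: "real^'n^'n \<Rightarrow> real^'m^'n \<Rightarrow> real \<Rightarrow> real^'m^'n" where
  "Bd A B T = Atil A T ** B"

definition Bi :: "real^'n^'n \<Rightarrow> real^'m^'n \<Rightarrow> real \<Rightarrow> real^'m^'n" where
  "Bi A B T = Ad A T ** B"

definition controllable :: "real^'n^'n \<Rightarrow> real^'m^'n \<Rightarrow> bool" where
  "controllable A B \<longleftrightarrow>
     span {matpow A k *v (B *v u) | k u. k < CARD('n)} = (UNIV :: (real^'n) set)"

definition hcat :: "'a^'m^'n \<Rightarrow> 'a^'p^'n \<Rightarrow> 'a^('m + 'p)^'n" where
  "hcat B1 B2 = (\<chi> i j. case j of Inl a \<Rightarrow> B1 $ i $ a | Inr b \<Rightarrow> B2 $ i $ b)"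

definition vcat :: "'a^'n^'r \<Rightarrow> 'a^'n^'s \<Rightarrow> 'a^'n^('r + 's)" where
  "vcat M1 M2 = (\<chi> i. case i of Inl a \<Rightarrow> M1 $ a | Inr b \<Rightarrow> M2 $ b)"

definition cmat :: "real^'m^'n \<Rightarrow> complex^'m^'n" where
  "cmat M = (\<chi> i j. complex_of_real (M $ i $ j))"

definition spec :: "real^'n^'n \<Rightarrow> complex set" where
  "spec A = {c. \<exists>v :: complex^'n. v \<noteq> 0 \<and> cmat A *v v = c *s v}"

end

theory Submission
  imports Defs "HOL-Computational_Algebra.Fundamental_Theorem_Algebra"
begin

(* By the Hautus test, (X, H) is controllable iff no left eigenvector of X annihilates H.
   Let v be a left eigenvector of e^(AT) with eigenvalue z annihilating B_d and B_i = e^(AT) B.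
   Then z = e^(cT) for an eigenvalue c of A, and v^T B_i = z v^T B, so v also annihilates B.
   If c is not resonant, i.e. no other eigenvalue of A differs from c by a multiple of 2 pi i / T,
   then the e^(cT)-eigenspace of e^(AT) consists of eigenvectors of A for c (the exponential
   neither merges distinct eigenvalues nor keeps a Jordan chain inside an eigenspace), and v
   would contradict the Hautus test for (A, B). So only resonant eigenvalues can obstruct
   controllability, and for them the obstruction is exactly a nonzero vector in the kernel. *)

lemma of_real_smult_eq_scaleR: "of_real r *s (v :: 'a::real_algebra_1^'n) = r *\<^sub>R v"
  unfolding vec_eq_iff vector_smult_component vector_scaleR_component
  by (simp add: scaleR_conv_of_real)

lemma linear_vector_matrix_mult: "Vector_Spaces.linear (*s) (*s) (\<lambda>x::'a::field^'m. x v* M)"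
proof -
  have "(\<lambda>x. x v* M) = (*v) (transpose M)" by auto
  then show ?thesis using vec.linear_axioms[of "transpose M"] by simp
qed

lemma vector_matrix_mat: "v v* mat c = c *s (v :: 'a::comm_ring_1^'n)"
proof -
  have "v $ i * (if i = j then c else 0) = (if i = j then v $ i * c else 0)" for i j
    by simp
  then show ?thesis by (simp add: vec_eq_iff vector_matrix_mult_def mat_def mult.commute)
qed

lemma left_eigenspace_subspace: "vec.subspace {y. y v* M = z *s y}"
  by (auto simp: vec.subspace_def vector_matrix_left_distrib vector_add_ldistrib
      scalar_vector_matrix_assoc vector_smult_assoc mult.commute)

lemma linearly_dependent_family:
  fixes K :: "nat \<Rightarrow> 'a::euclidean_space"
  assumes "DIM('a) < N"
  obtains a where "\<exists>j<N. a j \<noteq> 0" "(\<Sum>j<N. a j *\<^sub>R K j) = 0"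
proof (cases "inj_on K {..<N}")
  case True
  then have "\<not> independent (K ` {..<N})"
    using independent_bound[of "K ` {..<N}"] assms by (auto simp: card_image)
  then obtain u where u: "\<exists>v\<in>K ` {..<N}. u v \<noteq> 0" "(\<Sum>v\<in>K ` {..<N}. u v *\<^sub>R v) = 0"
    using dependent_finite[of "K ` {..<N}"] by auto
  show ?thesis
  proof (rule that[of "\<lambda>j. u (K j)"])
    show "\<exists>j<N. u (K j) \<noteq> 0" using u(1) by auto
    show "(\<Sum>j<N. u (K j) *\<^sub>R K j) = 0" using u(2) by (simp add: sum.reindex[OF True])
  qed
next
  case False
  then obtain i j where ij: "i < N" "j < N" "i \<noteq> j" "K i = K j" by (auto simp: inj_on_def)
  let ?a = "\<lambda>t. (if t = i then 1 else 0) - (if t = j then 1 else 0) :: real"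
  have "?a t *\<^sub>R K t = (if t = i then K t else 0) - (if t = j then K t else 0)" for t
    by (simp add: scaleR_diff_left)
  then have "(\<Sum>t<N. ?a t *\<^sub>R K t) = 0"
    using ij by (simp add: sum_subtractf)
  moreover have "\<exists>t<N. ?a t \<noteq> 0" using ij by auto
  ultimately show ?thesis by (intro that[of ?a])
qed

definition poly_apply :: "('a::comm_ring_1^'n \<Rightarrow> 'a^'n) \<Rightarrow> 'a poly \<Rightarrow> 'a^'n \<Rightarrow> 'a^'n" where
  "poly_apply f p w = (\<Sum>j\<le>degree p. coeff p j *s (f ^^ j) w)"

lemma poly_apply_bound:
  assumes "degree p < N"
  shows "poly_apply f p w = (\<Sum>j<N. coeff p j *s (f ^^ j) w)"
  unfolding poly_apply_def
  by (rule sum.mono_neutral_left) (use assms in \<open>auto simp: coeff_eq_0\<close>)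

lemma poly_apply_add: "poly_apply f (p + q) w = poly_apply f p w + poly_apply f q w"
proof -
  let ?N = "Suc (degree p + degree q)"
  have "degree (p + q) < ?N" using degree_add_le_max[of p q] by linarith
  then show ?thesis
    by (simp add: poly_apply_bound[of _ ?N] sum.distrib)
qed

lemma poly_apply_smult: "poly_apply f (smult c p) w = c *s poly_apply f p w"
proof -
  have "degree (smult c p) < Suc (degree p)" using degree_smult_le[of c p] by linarith
  then show ?thesis
    by (simp add: poly_apply_bound[of _ "Suc (degree p)"] vec_eq_iff sum_distrib_left mult.assoc)
qed

lemma poly_apply_one [simp]: "poly_apply f 1 w = w"
  by (simp add: poly_apply_def)

lemma poly_apply_in_subspace:
  assumes "vec.subspace U" "\<And>x. x \<in> U \<Longrightarrow> f x \<in> U" "w \<in> U"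
  shows "poly_apply f p w \<in> U"
proof -
  have "(f ^^ j) w \<in> U" for j by (induction j) (simp_all add: assms)
  then show ?thesis
    unfolding poly_apply_def by (intro vec.subspace_sum vec.subspace_scale assms(1)) auto
qed

lemma poly_apply_mult_linear_factor:
  assumes "Vector_Spaces.linear (*s) (*s) f"
  shows "poly_apply f (p * [:-r, 1:]) w = f (poly_apply f p w) - r *s poly_apply f p w"
proof -
  interpret f: Vector_Spaces.linear "(*s)" "(*s)" f by (rule assms)
  let ?N = "Suc (Suc (degree p))"
  have "degree (pCons 0 p) < ?N" by (cases "p = 0") auto
  then have "poly_apply f (pCons 0 p) w = (\<Sum>j<?N. coeff (pCons 0 p) j *s (f ^^ j) w)"
    by (rule poly_apply_bound)
  also have "\<dots> = (\<Sum>j\<le>degree p. coeff p j *s (f ^^ Suc j) w)"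
    by (subst sum.lessThan_Suc_shift) (simp add: lessThan_Suc_atMost)
  also have "\<dots> = f (poly_apply f p w)"
    by (simp add: poly_apply_def f.sum f.scale)
  finally have "poly_apply f (pCons 0 p) w = f (poly_apply f p w)" .
  moreover have "p * [:-r, 1:] = pCons 0 p + smult (-r) p"
    by (simp add: mult.commute[of p])
  ultimately show ?thesis
    by (simp only: poly_apply_add poly_apply_smult vector_smult_lneg diff_conv_add_uminus)
qed

lemma annihilating_polynomial:
  fixes f :: "complex^'n \<Rightarrow> complex^'n"
  obtains p where "p \<noteq> 0" "poly_apply f p w = 0"
proof -
  define N where "N = Suc DIM(complex^'n)"
  have "DIM(complex^'n) < N" by (simp add: N_def)
  then obtain a where a: "\<exists>j<N. a j \<noteq> 0" "(\<Sum>j<N. a j *\<^sub>R (f ^^ j) w) = 0"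
    by (rule linearly_dependent_family)
  define p where "p = Poly (map (\<lambda>j. complex_of_real (a j)) [0..<N])"
  have coeff_p: "coeff p j = (if j < N then complex_of_real (a j) else 0)" for j
    by (simp add: p_def nth_default_def)
  have "p \<noteq> 0"
    using a(1) coeff_p by (metis coeff_0 of_real_eq_0_iff)
  moreover have "degree p < N"
    using degree_le[of "N - 1" p] by (auto simp: coeff_p N_def)
  then have "poly_apply f p w = 0"
    using a(2) by (simp add: poly_apply_bound coeff_p of_real_smult_eq_scaleR)
  ultimately show ?thesis by (rule that)
qed

lemma invariant_subspace_has_eigenvector:
  fixes f :: "complex^'n \<Rightarrow> complex^'n"
  assumes f_linear: "Vector_Spaces.linear (*s) (*s) f"
    and U: "vec.subspace U" "\<And>x. x \<in> U \<Longrightarrow> f x \<in> U"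
    and u0: "u0 \<in> U" "u0 \<noteq> 0"
  obtains u c where "u \<in> U" "u \<noteq> 0" "f u = c *s u"
proof -
  obtain p where "p \<noteq> 0" "poly_apply f p u0 = 0"
    by (rule annihilating_polynomial)
  obtain root where root: "smult (lead_coeff p) (\<Prod>i<degree p. [:-root i, 1:]) = p"
    using complex_poly_decompose' by blast
  define Q where "Q k = (\<Prod>i<k. [:-root i, 1:])" for k
  have "lead_coeff p *s poly_apply f (Q (degree p)) u0 = 0"
    using \<open>poly_apply f p u0 = 0\<close> root by (simp add: Q_def poly_apply_smult[symmetric])
  then have "poly_apply f (Q (degree p)) u0 = 0"
    using \<open>p \<noteq> 0\<close> by simp
  moreover have "poly_apply f (Q 0) u0 \<noteq> 0"
    using u0 by (simp add: Q_def)
  ultimately obtain k where k: "poly_apply f (Q k) u0 \<noteq> 0" "poly_apply f (Q (Suc k)) u0 = 0"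
    using ex_least_nat_less[of "\<lambda>k. poly_apply f (Q k) u0 = 0"] by blast
  let ?u = "poly_apply f (Q k) u0"
  have "Q (Suc k) = Q k * [:-root k, 1:]" by (simp add: Q_def)
  then have "f ?u - root k *s ?u = 0"
    using k(2) by (simp only: poly_apply_mult_linear_factor[OF f_linear])
  then have "f ?u = root k *s ?u" by simp
  moreover have "?u \<in> U" by (rule poly_apply_in_subspace[OF U u0(1)])
  ultimately show ?thesis using that k(1) by blast
qed

lemma cmat_mult: "cmat (X ** Y) = cmat X ** cmat Y"
  by (simp add: cmat_def matrix_matrix_mult_def vec_eq_iff)

lemma cmat_mat: "cmat (mat c) = mat (complex_of_real c)"
  by (simp add: cmat_def mat_def vec_eq_iff)

lemma vector_cmat_scaleR: "v v* cmat (c *\<^sub>R X) = complex_of_real c *s (v v* cmat X)"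
  by (simp add: cmat_def vector_matrix_mult_def vec_eq_iff sum_distrib_left mult_ac)

(* A left eigenvector v^T X = r v^T of a real matrix X is written  v v* cmat X = r *s v. *)

lemma vector_cmat_matpow_eigen:
  assumes "v v* cmat X = r *s v"
  shows "v v* cmat (matpow X k) = r ^ k *s v"
proof (induction k)
  case 0
  then show ?case by (simp add: cmat_mat vector_matrix_mat)
next
  case (Suc k)
  have "v v* cmat (matpow X (Suc k)) = (v v* cmat X) v* cmat (matpow X k)"
    by (simp add: cmat_mult vector_matrix_mul_assoc)
  then show ?case
    by (simp add: assms Suc scalar_vector_matrix_assoc)
qed

lemma vector_cmat_matpow_generalized_eigen:
  assumes "y v* cmat X = r *s y + x" and "x v* cmat X = r *s x"
  shows "y v* cmat (matpow X k) = r ^ k *s y + (of_nat k * r ^ (k - 1)) *s x"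
proof (induction k)
  case 0
  then show ?case by (simp add: cmat_mat vector_matrix_mat)
next
  case (Suc k)
  have "y v* cmat (matpow X (Suc k)) = (r *s y + x) v* cmat (matpow X k)"
    by (simp add: cmat_mult assms(1) flip: vector_matrix_mul_assoc)
  also have "\<dots> = r *s (r ^ k *s y + (of_nat k * r ^ (k - 1)) *s x) + r ^ k *s x"
    by (simp add: vector_matrix_left_distrib scalar_vector_matrix_assoc Suc
        vector_cmat_matpow_eigen[OF assms(2)])
  also have "\<dots> = r ^ Suc k *s y + (of_nat (Suc k) * r ^ (Suc k - 1)) *s x"
    by (cases k) (simp_all add: vec_eq_iff algebra_simps)
  finally show ?case .
qed

lemma matrix_vector_mat: "mat c *v v = c *s (v :: 'a::comm_ring_1^'n)"
  by (metis transpose_mat vector_transpose_matrix vector_matrix_mat)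

lemma det_eq_0_iff_kernel:
  fixes M :: "'a::field^'n^'n"
  shows "det M = 0 \<longleftrightarrow> (\<exists>v. v \<noteq> 0 \<and> M *v v = 0)"
  using det_nz_iff_inj_gen[OF vec.linear_axioms[of M]] vec.inj_iff_eq_0[of M]
  by auto

lemma left_eigenvalue_in_spec:
  assumes "v v* cmat A = r *s v" and "v \<noteq> 0"
  shows "r \<in> spec A"
proof -
  have "transpose (cmat A - mat r) *v v = 0"
    using assms(1) by (simp add: vector_matrix_mult_diff_rdistrib vector_matrix_mat)
  then have "det (cmat A - mat r) = 0"
    using assms(2) det_eq_0_iff_kernel det_transpose by metis
  then obtain w where "w \<noteq> 0" "(cmat A - mat r) *v w = 0"
    using det_eq_0_iff_kernel by blast
  then have "cmat A *v w = r *s w"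
    by (simp add: matrix_vector_mult_diff_rdistrib matrix_vector_mat)
  then show ?thesis
    using \<open>w \<noteq> 0\<close> unfolding spec_def by blast
qed

definition krylov_space :: "real^'n^'n \<Rightarrow> real^'m^'n \<Rightarrow> nat \<Rightarrow> (real^'n) set" where
  "krylov_space X H j = span {matpow X k *v (H *v u) | k u. k < j}"

lemma controllable_krylov_space:
  fixes X :: "real^'n^'n"
  shows "controllable X H \<longleftrightarrow> krylov_space X H CARD('n) = UNIV"
  by (simp add: controllable_def krylov_space_def)

lemma span_krylov_space [simp]: "span (krylov_space X H j) = krylov_space X H j"
  by (simp add: krylov_space_def)

lemma krylov_space_mono: "j \<le> j' \<Longrightarrow> krylov_space X H j \<subseteq> krylov_space X H j'"
  unfolding krylov_space_def by (intro span_mono) auto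

lemma matrix_vector_mult_krylov_space:
  assumes "w \<in> krylov_space X H j"
  shows "X *v w \<in> krylov_space X H (Suc j)"
proof -
  have "X *v (matpow X k *v (H *v u)) \<in> krylov_space X H (Suc j)" if "k < j" for k u
  proof -
    have "matpow X (Suc k) *v (H *v u) \<in> krylov_space X H (Suc j)"
      using that unfolding krylov_space_def by (blast intro: span_base)
    then show ?thesis by (simp add: matrix_vector_mul_assoc matrix_mul_assoc)
  qed
  then have "krylov_space X H j \<subseteq> {w. X *v w \<in> krylov_space X H (Suc j)}"
    unfolding krylov_space_def
    by (intro span_minimal) (auto simp: subspace_def matrix_vector_right_distrib
        matrix_vector_mult_scaleR span_zero span_add span_scale)
  then show ?thesis using assms by blast
qed

lemma krylov_space_stable_Suc:
  assumes "krylov_space X H (Suc j) \<subseteq> krylov_space X H j"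
  shows "krylov_space X H (Suc (Suc j)) \<subseteq> krylov_space X H (Suc j)"
proof -
  have "matpow X k *v (H *v u) \<in> krylov_space X H (Suc j)" if "k < Suc (Suc j)" for k u
  proof (cases "k = Suc j")
    case True
    have "matpow X j *v (H *v u) \<in> krylov_space X H j"
      using assms unfolding krylov_space_def by (blast intro: span_base)
    then have "X *v (matpow X j *v (H *v u)) \<in> krylov_space X H (Suc j)"
      by (rule matrix_vector_mult_krylov_space)
    then show ?thesis using True by (simp add: matrix_vector_mul_assoc matrix_mul_assoc)
  next
    case False
    then show ?thesis
      using that unfolding krylov_space_def by (auto intro!: span_base)
  qed
  then show ?thesis
    unfolding krylov_space_def[of X H "Suc (Suc j)"]
    by (intro span_minimal) (auto simp: krylov_space_def)
qed

lemma krylov_space_stable: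
  assumes "krylov_space X H (Suc j) \<subseteq> krylov_space X H j"
  shows "krylov_space X H (j + d) \<subseteq> krylov_space X H j"
proof -
  have step: "krylov_space X H (Suc (j + d)) \<subseteq> krylov_space X H (j + d)" for d
  proof (induction d)
    case 0
    then show ?case using assms by simp
  next
    case (Suc d)
    then show ?case by (simp add: krylov_space_stable_Suc)
  qed
  show ?thesis
  proof (induction d)
    case (Suc d)
    then show ?case using step[of d] by (metis add_Suc_right order_trans)
  qed simp
qed

(* Substitute for Cayley-Hamilton: the Krylov spaces grow strictly until they stabilise,
   so they have stabilised after CARD('n) steps. *)

lemma matpow_in_krylov_space:
  fixes X :: "real^'n^'n"
  shows "matpow X k *v (H *v u) \<in> krylov_space X H CARD('n)"
proof (cases "\<exists>j<CARD('n). krylov_space X H (Suc j) \<subseteq> krylov_space X H j")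
  case True
  then obtain j where j: "j < CARD('n)" "krylov_space X H (Suc j) \<subseteq> krylov_space X H j"
    by blast
  have "matpow X k *v (H *v u) \<in> krylov_space X H (j + Suc k)"
    unfolding krylov_space_def by (auto intro!: span_base)
  moreover have "krylov_space X H (j + Suc k) \<subseteq> krylov_space X H j"
    by (rule krylov_space_stable[OF j(2)])
  moreover have "krylov_space X H j \<subseteq> krylov_space X H CARD('n)"
    using j(1) by (intro krylov_space_mono) simp
  ultimately show ?thesis by blast
next
  case False
  have "j \<le> dim (krylov_space X H j)" if "j \<le> CARD('n)" for j
    using that
  proof (induction j)
    case 0
    then show ?case by simp
  next
    case (Suc j)
    then have "\<not> krylov_space X H (Suc j) \<subseteq> krylov_space X H j"
      using False by simp
    then have "krylov_space X H j \<subset> krylov_space X H (Suc j)"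
      using krylov_space_mono[of j "Suc j" X H] by auto
    then have "dim (krylov_space X H j) < dim (krylov_space X H (Suc j))"
      using dim_psubset[of "krylov_space X H j" "krylov_space X H (Suc j)"] by simp
    then show ?case using Suc by simp
  qed
  then have "dim (krylov_space X H CARD('n)) = DIM(real^'n)"
    using dim_subset_UNIV_cart[of "krylov_space X H CARD('n)"] by (simp add: le_antisym)
  then have "krylov_space X H CARD('n) = UNIV"
    using dim_eq_full[of "krylov_space X H CARD('n)"] by simp
  then show ?thesis by simp
qed

(* The real and imaginary parts of v are orthogonal to the whole Kalman span. *)

lemma controllable_imp_left_annihilator_eq_0:
  fixes X :: "real^'n^'n" and v :: "complex^'n"
  assumes "controllable X H"
    and "\<And>k. k < CARD('n) \<Longrightarrow> v v* cmat (matpow X k ** H) = 0"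
  shows "v = 0"
proof -
  have real_part: "y = 0" if "\<And>k. k < CARD('n) \<Longrightarrow> y v* (matpow X k ** H) = 0" for y
  proof -
    have "orthogonal y w" if "w \<in> {matpow X k *v (H *v u) | k u. k < CARD('n)}" for w
      using that \<open>\<And>k. k < CARD('n) \<Longrightarrow> y v* (matpow X k ** H) = 0\<close>
      by (auto simp: orthogonal_def matrix_vector_mul_assoc simp flip: dot_lmul_matrix)
    then have "orthogonal y y"
      using assms(1) orthogonal_to_span unfolding controllable_def by blast
    then show ?thesis by (simp add: orthogonal_def)
  qed
  have Re: "(\<chi> i. Re (v $ i)) v* M = (\<chi> j. Re ((v v* cmat M) $ j))"
    and Im: "(\<chi> i. Im (v $ i)) v* M = (\<chi> j. Im ((v v* cmat M) $ j))" for M :: "real^'m^'n"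
    by (simp_all add: vec_eq_iff vector_matrix_mult_def cmat_def Re_sum Im_sum)
  have "(\<chi> i. Re (v $ i)) = 0" "(\<chi> i. Im (v $ i)) = 0"
    by (intro real_part; simp add: Re Im assms(2) vec_eq_iff)+
  then show ?thesis by (simp add: vec_eq_iff complex_eq_iff)
qed

lemma vector_cmat_of_real:
  "(\<chi> i. complex_of_real (y $ i)) v* cmat M = (\<chi> j. complex_of_real ((y v* M) $ j))"
  by (simp add: vec_eq_iff vector_matrix_mult_def cmat_def)

lemma not_controllable_left_eigenvector:
  fixes X :: "real^'n^'n"
  assumes "\<not> controllable X H"
  obtains v z where "v \<noteq> 0" "v v* cmat X = z *s v" "v v* cmat H = 0"
proof -
  have "dim (krylov_space X H CARD('n)) \<noteq> DIM(real^'n)"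
    using assms dim_eq_full[of "krylov_space X H CARD('n)"] by (simp add: controllable_krylov_space)
  then have "dim (krylov_space X H CARD('n)) < DIM(real^'n)"
    using dim_subset_UNIV_cart[of "krylov_space X H CARD('n)"] by simp
  then obtain y where y: "y \<noteq> 0" "\<And>w. w \<in> krylov_space X H CARD('n) \<Longrightarrow> orthogonal y w"
    using orthogonal_to_subspace_exists[of "krylov_space X H CARD('n)"] by auto
  have y_kernel: "y v* (matpow X k ** H) = 0" for k
  proof -
    have "(y v* (matpow X k ** H)) \<bullet> u = 0" for u
      using y(2)[OF matpow_in_krylov_space[of X k H u]]
      by (simp add: orthogonal_def dot_lmul_matrix matrix_vector_mul_assoc)
    then show ?thesis using inner_eq_zero_iff by blast
  qed
  define U where "U = {v. \<forall>k. v v* cmat (matpow X k ** H) = 0}"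
  have "vec.subspace U"
    by (auto simp: U_def vec.subspace_def vector_matrix_left_distrib scalar_vector_matrix_assoc)
  moreover have "v v* cmat X \<in> U" if "v \<in> U" for v
  proof -
    have "(v v* cmat X) v* cmat (matpow X k ** H) = v v* cmat (matpow X (Suc k) ** H)" for k
      by (simp add: vector_matrix_mul_assoc cmat_mult matrix_mul_assoc)
    then show ?thesis using that by (auto simp: U_def simp del: matpow.simps)
  qed
  moreover have "(\<chi> i. complex_of_real (y $ i)) \<in> U"
    using y_kernel
    by (simp add: U_def vector_cmat_of_real vec_eq_iff)
  moreover have "(\<chi> i. complex_of_real (y $ i)) \<noteq> 0"
    using y(1) by (simp add: vec_eq_iff)
  ultimately obtain v z where v: "v \<in> U" "v \<noteq> 0" "v v* cmat X = z *s v"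
    by (rule invariant_subspace_has_eigenvector[OF linear_vector_matrix_mult])
  have "v v* cmat (matpow X 0 ** H) = 0"
    using v(1) unfolding U_def by blast
  then have "v v* cmat H = 0" by simp
  then show ?thesis using that v(2,3) by blast
qed

lemma controllable_iff_hautus:
  fixes X :: "real^'n^'n"
  shows "controllable X H \<longleftrightarrow>
    (\<forall>v z. v v* cmat X = z *s v \<longrightarrow> v v* cmat H = 0 \<longrightarrow> v = 0)"
proof
  assume "controllable X H"
  show "\<forall>v z. v v* cmat X = z *s v \<longrightarrow> v v* cmat H = 0 \<longrightarrow> v = 0"
  proof (intro allI impI)
    fix v z
    assume eigen: "v v* cmat X = z *s v" and "v v* cmat H = 0"
    have "v v* cmat (matpow X k ** H) = 0" for k
      by (simp add: cmat_mult vector_cmat_matpow_eigen[OF eigen] \<open>v v* cmat H = 0\<close>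
          scalar_vector_matrix_assoc flip: vector_matrix_mul_assoc)
    then show "v = 0" using controllable_imp_left_annihilator_eq_0[OF \<open>controllable X H\<close>] by blast
  qed
qed (use not_controllable_left_eigenvector in blast)

(* Submultiplicative and above the Euclidean norm: it dominates the exponential series. *)

definition entry_abs_sum :: "real^'m^'n \<Rightarrow> real" where
  "entry_abs_sum X = (\<Sum>i\<in>UNIV. \<Sum>j\<in>UNIV. \<bar>X $ i $ j\<bar>)"

lemma norm_le_entry_abs_sum: "norm X \<le> entry_abs_sum X"
proof -
  have "norm X \<le> (\<Sum>i\<in>UNIV. norm (X $ i))" by (simp add: norm_vec_def L2_set_le_sum)
  also have "\<dots> \<le> entry_abs_sum X" unfolding entry_abs_sum_def by (intro sum_mono norm_le_l1_cart)
  finally show ?thesis .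
qed

lemma entry_abs_sum_mult:
  "entry_abs_sum ((X::real^'k^'n) ** (Y::real^'m^'k)) \<le> entry_abs_sum X * entry_abs_sum Y"
proof -
  have "entry_abs_sum (X ** Y) \<le> (\<Sum>i\<in>UNIV. \<Sum>j\<in>UNIV. \<Sum>k\<in>UNIV. \<bar>X$i$k\<bar> * \<bar>Y$k$j\<bar>)"
    unfolding entry_abs_sum_def matrix_matrix_mult_def
    by (intro sum_mono) (auto intro!: order_trans[OF sum_abs] simp: abs_mult)
  also have "\<dots> = (\<Sum>i\<in>UNIV. \<Sum>k\<in>UNIV. \<Sum>j\<in>UNIV. \<bar>X$i$k\<bar> * \<bar>Y$k$j\<bar>)"
    by (intro sum.cong refl sum.swap)
  also have "\<dots> = (\<Sum>i\<in>UNIV. \<Sum>k\<in>UNIV. \<bar>X$i$k\<bar> * (\<Sum>j\<in>UNIV. \<bar>Y$k$j\<bar>))"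
    by (simp add: sum_distrib_left)
  also have "\<dots> \<le> (\<Sum>i\<in>UNIV. \<Sum>k\<in>UNIV. \<bar>X$i$k\<bar> * entry_abs_sum Y)"
    unfolding entry_abs_sum_def
    by (intro sum_mono mult_left_mono member_le_sum) (auto intro: sum_nonneg)
  also have "\<dots> = entry_abs_sum X * entry_abs_sum Y"
    by (simp add: entry_abs_sum_def sum_distrib_right)
  finally show ?thesis .
qed

lemma entry_abs_sum_matpow:
  "entry_abs_sum (matpow M k) \<le> real CARD('n) * entry_abs_sum (M::real^'n^'n) ^ k"
proof (induction k)
  case 0
  have "(\<Sum>j\<in>UNIV. \<bar>(mat 1 :: real^'n^'n) $ i $ j\<bar>) = 1" for i
    by (simp add: mat_def if_distrib[of abs] cong: if_cong)
  then show ?case by (simp add: entry_abs_sum_def)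
next
  case (Suc k)
  have "entry_abs_sum (matpow M (Suc k)) \<le> entry_abs_sum M * entry_abs_sum (matpow M k)"
    by (simp add: entry_abs_sum_mult)
  also have "\<dots> \<le> entry_abs_sum M * (real CARD('n) * entry_abs_sum M ^ k)"
    by (intro mult_left_mono Suc) (simp add: entry_abs_sum_def sum_nonneg)
  finally show ?case by (simp add: mult_ac)
qed

lemma sums_mexp: "(\<lambda>k. (1 / fact k) *\<^sub>R matpow (M::real^'n^'n) k) sums mexp M"
proof -
  have bound: "norm ((1 / fact k) *\<^sub>R matpow M k)
      \<le> real CARD('n) * (entry_abs_sum M ^ k /\<^sub>R fact k)" for k
  proof -
    have "norm ((1 / fact k) *\<^sub>R matpow M k)
        \<le> (1 / fact k) * (real CARD('n) * entry_abs_sum M ^ k)"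
      using order_trans[OF norm_le_entry_abs_sum entry_abs_sum_matpow[of M k]]
      by (simp add: divide_right_mono)
    then show ?thesis by (simp add: field_simps)
  qed
  have "summable (\<lambda>k. real CARD('n) * (entry_abs_sum M ^ k /\<^sub>R fact k))"
    by (intro summable_mult summable_exp_generic)
  then have "summable (\<lambda>k. (1 / fact k) *\<^sub>R matpow M k)"
    by (rule summable_comparison_test[rotated]) (use bound in blast)
  then show ?thesis unfolding mexp_def by (rule summable_sums)
qed

lemma matpow_commute:
  assumes "X ** M = M ** X"
  shows "X ** matpow M k = matpow M k ** X"
proof (induction k)
  case (Suc k)
  have "X ** matpow M (Suc k) = M ** (X ** matpow M k)"
    by (simp add: matrix_mul_assoc assms)
  then show ?case by (simp add: Suc matrix_mul_assoc)
qed simp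

lemma mexp_commute:
  fixes X M :: "real^'n^'n"
  assumes "X ** M = M ** X"
  shows "X ** mexp M = mexp M ** X"
proof -
  have "linear (\<lambda>Y::real^'n^'n. X ** Y)"
    by (intro linearI) (simp_all add: matrix_add_ldistrib matrix_scalar_ac scalar_matrix_assoc)
  moreover have "linear (\<lambda>Y::real^'n^'n. Y ** X)"
    by (intro linearI) (simp_all add: matrix_matrix_mult_def vec_eq_iff sum.distrib
        distrib_right sum_distrib_left mult.assoc)
  ultimately have "(\<lambda>k. X ** ((1 / fact k) *\<^sub>R matpow M k)) sums (X ** mexp M)"
    and "(\<lambda>k. ((1 / fact k) *\<^sub>R matpow M k) ** X) sums (mexp M ** X)"
    by (auto intro: bounded_linear.sums[OF _ sums_mexp] simp: linear_conv_bounded_linear)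
  moreover have "X ** ((1 / fact k) *\<^sub>R matpow M k) = ((1 / fact k) *\<^sub>R matpow M k) ** X" for k
    by (simp add: matrix_scalar_ac matpow_commute[OF assms] flip: scalar_matrix_assoc)
  ultimately show ?thesis by (simp add: sums_unique2)
qed

lemma bounded_linear_vector_cmat: "bounded_linear (\<lambda>X::real^'m^'n. v v* cmat X)"
proof -
  have "v v* cmat (X + Y) = v v* cmat X + v v* cmat Y" for X Y :: "real^'m^'n"
    by (simp add: cmat_def vector_matrix_mult_def vec_eq_iff distrib_left sum.distrib)
  moreover have "v v* cmat (c *\<^sub>R X) = c *\<^sub>R (v v* cmat X)" for c and X :: "real^'m^'n"
    by (simp add: vector_cmat_scaleR of_real_smult_eq_scaleR)
  ultimately have "linear (\<lambda>X::real^'m^'n. v v* cmat X)"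
    by (rule linearI)
  then show ?thesis by (simp add: linear_conv_bounded_linear)
qed

lemma bounded_linear_smult_vector: "bounded_linear (\<lambda>c::complex. c *s v)"
proof -
  have "(c *\<^sub>R a) *s v = c *\<^sub>R (a *s v)" for c and a :: complex
    unfolding of_real_smult_eq_scaleR[symmetric] vector_smult_assoc
    by (simp add: scaleR_conv_of_real)
  then have "linear (\<lambda>c::complex. c *s v)"
    by (intro linearI) (simp_all add: vector_sadd_rdistrib)
  then show ?thesis by (simp add: linear_conv_bounded_linear)
qed

lemma sums_vector_cmat_mexp:
  "(\<lambda>k. complex_of_real (1 / fact k) *s (v v* cmat (matpow M k)))
     sums (v v* cmat (mexp M))"
  using bounded_linear.sums[OF bounded_linear_vector_cmat sums_mexp, of v M]
  by (simp add: vector_cmat_scaleR)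

lemma mexp_left_eigen:
  assumes "v v* cmat M = r *s v"
  shows "v v* cmat (mexp M) = exp r *s v"
proof -
  have "(\<lambda>k. (r ^ k /\<^sub>R fact k) *s v) sums (exp r *s v)"
    by (rule bounded_linear.sums[OF bounded_linear_smult_vector exp_converges])
  moreover have "complex_of_real (1 / fact k) *s (v v* cmat (matpow M k))
      = (r ^ k /\<^sub>R fact k) *s v" for k
    by (simp add: vector_cmat_matpow_eigen[OF assms] vector_smult_assoc scaleR_conv_of_real
        field_simps)
  ultimately show ?thesis
    using sums_vector_cmat_mexp[of v M] by (simp add: sums_unique2)
qed

lemma mexp_left_generalized_eigen:
  assumes "y v* cmat M = r *s y + x" and "x v* cmat M = r *s x"
  shows "y v* cmat (mexp M) = exp r *s y + exp r *s x"
proof -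
  define c where "c k = (of_nat k * r ^ (k - 1)) /\<^sub>R fact k" for k
  have "c (Suc k) = r ^ k /\<^sub>R fact k" for k
    by (simp add: c_def field_simps scaleR_conv_of_real del: of_nat_Suc)
  then have "(\<lambda>k. c (Suc k)) sums exp r"
    using exp_converges[of r] by simp
  then have "c sums exp r"
    using sums_Suc[of c "exp r"] by (simp add: c_def)
  then have "(\<lambda>k. (r ^ k /\<^sub>R fact k) *s y + c k *s x) sums (exp r *s y + exp r *s x)"
    by (intro sums_add bounded_linear.sums[OF bounded_linear_smult_vector] exp_converges)
  moreover have "complex_of_real (1 / fact k) *s (y v* cmat (matpow M k))
      = (r ^ k /\<^sub>R fact k) *s y + c k *s x" for k
    by (simp add: vector_cmat_matpow_generalized_eigen[OF assms] c_def vector_add_ldistrib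
        vector_smult_assoc scaleR_conv_of_real field_simps)
  ultimately show ?thesis
    using sums_vector_cmat_mexp[of y M] by (simp add: sums_unique2)
qed

lemma A_Ad_commute: "A ** Ad A T = Ad A T ** A"
  unfolding Ad_def by (rule mexp_commute) (simp add: matrix_scalar_ac scalar_matrix_assoc)

lemma Ad_left_eigen:
  assumes "v v* cmat A = c *s v"
  shows "v v* cmat (Ad A T) = exp (c * complex_of_real T) *s v"
  unfolding Ad_def
  by (rule mexp_left_eigen) (simp add: vector_cmat_scaleR assms vector_smult_assoc mult.commute)

lemma Ad_left_generalized_eigen:
  assumes "y v* cmat A = r *s y + x" and "x v* cmat A = r *s x"
  shows "y v* cmat (Ad A T) = exp (r * complex_of_real T) *s y
    + exp (r * complex_of_real T) *s (complex_of_real T *s x)"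
  unfolding Ad_def
  by (rule mexp_left_generalized_eigen)
    (simp_all add: vector_cmat_scaleR assms vector_add_ldistrib vector_smult_assoc mult.commute
      scalar_vector_matrix_assoc)

lemma Ad_left_eigenspace_invariant:
  assumes "y v* cmat (Ad A T) = z *s y"
  shows "(y v* cmat A) v* cmat (Ad A T) = z *s (y v* cmat A)"
proof -
  have "(y v* cmat A) v* cmat (Ad A T) = (y v* cmat (Ad A T)) v* cmat A"
    by (simp add: vector_matrix_mul_assoc A_Ad_commute flip: cmat_mult)
  then show ?thesis by (simp add: assms scalar_vector_matrix_assoc)
qed

lemma Ad_left_eigenvalue:
  assumes "v v* cmat (Ad A T) = z *s v" and "v \<noteq> 0"
  obtains c where "c \<in> spec A" "z = exp (c * complex_of_real T)"
proof -
  obtain u c where u: "u \<in> {y. y v* cmat (Ad A T) = z *s y}" "u \<noteq> 0" "u v* cmat A = c *s u"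
    by (rule invariant_subspace_has_eigenvector[OF linear_vector_matrix_mult
          left_eigenspace_subspace]) (use assms Ad_left_eigenspace_invariant in auto)
  then have "z *s u = exp (c * complex_of_real T) *s u"
    using Ad_left_eigen[OF u(3)] by simp
  then show ?thesis
    using that left_eigenvalue_in_spec[OF u(3,2)] u(2) by simp
qed

(* On a Jordan chain y, x of A the exponential acts as y |-> e^(rT) (y + T x). *)

lemma Ad_left_eigen_Jordan_chain:
  assumes "T \<noteq> 0" and "y v* cmat (Ad A T) = exp (r * complex_of_real T) *s y"
    and "y v* cmat A = r *s y + x" and "x v* cmat A = r *s x"
  shows "x = 0"
proof -
  have "exp (r * complex_of_real T) *s (complex_of_real T *s x) = 0"
    using Ad_left_generalized_eigen[OF assms(3,4), of T] assms(2) by simp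
  then show ?thesis using assms(1) by simp
qed

definition resonant_spec :: "real^'n^'n \<Rightarrow> real \<Rightarrow> complex set" where
  "resonant_spec A T = {c \<in> spec A. \<exists>l::int. \<exists>\<gamma> \<in> spec A - {c}.
     (c - \<gamma>) * complex_of_real T = 2 * \<i> * complex_of_real pi * of_int l}"

lemma exp_eq_nonresonant:
  assumes "exp (c * complex_of_real T) = exp (r * complex_of_real T)"
    and "c \<in> spec A" and "r \<in> spec A" and "r \<notin> resonant_spec A T"
  shows "c = r"
proof -
  obtain n :: int where "c * complex_of_real T = r * complex_of_real T + of_int (2 * n) * pi * \<i>"
    using assms(1) exp_eq by blast
  then have "(r - c) * complex_of_real T = 2 * \<i> * complex_of_real pi * of_int (- n)"
    by (simp add: algebra_simps)
  then show ?thesis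
    using assms(2-4) unfolding resonant_spec_def by blast
qed

(* The e^(rT)-eigenspace Y of e^(AT) is A-invariant. An eigenvector of A in (A - r) Y has an
   eigenvalue c with e^(cT) = e^(rT), so c = r, which yields a Jordan chain; hence A = r on Y. *)

lemma Ad_left_eigenvector_nonresonant:
  assumes "T \<noteq> 0" and "r \<in> spec A" and "r \<notin> resonant_spec A T"
    and "v v* cmat (Ad A T) = exp (r * complex_of_real T) *s v"
  shows "v v* cmat A = r *s v"
proof -
  define Y where "Y = {y. y v* cmat (Ad A T) = exp (r * complex_of_real T) *s y}"
  define N where "N y = y v* (cmat A - mat r)" for y
  have N_linear: "Vector_Spaces.linear (*s) (*s) N"
    unfolding N_def by (rule linear_vector_matrix_mult)
  have N: "N y = y v* cmat A - r *s y" for y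
    by (simp add: N_def vector_matrix_mult_diff_rdistrib vector_matrix_mat)
  have Y: "vec.subspace Y" "\<And>y. y \<in> Y \<Longrightarrow> y v* cmat A \<in> Y"
    using left_eigenspace_subspace Ad_left_eigenspace_invariant by (auto simp: Y_def)
  have N_commute: "(N y) v* cmat A = N (y v* cmat A)" for y
    by (simp add: N vector_matrix_mult_diff_distrib scalar_vector_matrix_assoc)
  have NY: "N y \<in> Y" if "y \<in> Y" for y
    using Y that by (simp add: N vec.subspace_diff vec.subspace_scale)
  have "\<not> (\<exists>u\<in>N ` Y. u \<noteq> 0)"
  proof
    assume "\<exists>u\<in>N ` Y. u \<noteq> 0"
    then obtain u0 where u0: "u0 \<in> N ` Y" "u0 \<noteq> 0" by blast
    have "x v* cmat A \<in> N ` Y" if "x \<in> N ` Y" for x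
      using that Y(2) N_commute by auto
    then obtain u c where "u \<in> N ` Y" "u \<noteq> 0" and u_eigen: "u v* cmat A = c *s u"
      by (rule invariant_subspace_has_eigenvector[OF linear_vector_matrix_mult
            vec.linear_subspace_image[OF N_linear Y(1)] _ u0])
    then obtain y where "y \<in> Y" "u = N y" by blast
    have "exp (c * complex_of_real T) *s u = exp (r * complex_of_real T) *s u"
      using Ad_left_eigen[OF u_eigen] NY[OF \<open>y \<in> Y\<close>] \<open>u = N y\<close> by (simp add: Y_def)
    then have "c = r"
      using exp_eq_nonresonant left_eigenvalue_in_spec[OF u_eigen] \<open>u \<noteq> 0\<close> assms(2,3) by simp
    have "N y = 0"
      using \<open>y \<in> Y\<close> u_eigen
      by (intro Ad_left_eigen_Jordan_chain[OF assms(1), where y = y and A = A and r = r])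
        (simp_all add: Y_def N \<open>u = N y\<close> \<open>c = r\<close>)
    then show False using \<open>u \<noteq> 0\<close> \<open>u = N y\<close> by simp
  qed
  then show ?thesis
    using assms(4) by (force simp: Y_def N)
qed

lemma vector_cmat_Bi:
  assumes "v v* cmat (Ad A T) = z *s v"
  shows "v v* cmat (Bi A B T) = z *s (v v* cmat B)"
  using assms
  by (simp add: Bi_def cmat_mult scalar_vector_matrix_assoc flip: vector_matrix_mul_assoc)

lemma left_eigenvector_annihilating_Bi_resonant:
  fixes A :: "real^'n^'n"
  assumes "controllable A B" and "T \<noteq> 0"
    and eigen: "v v* cmat (Ad A T) = z *s v" and "v v* cmat (Bi A B T) = 0" and "v \<noteq> 0"
  obtains \<mu> where "\<mu> \<in> resonant_spec A T" "z = exp (\<mu> * complex_of_real T)" "v v* cmat B = 0"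
proof -
  obtain c where c: "c \<in> spec A" "z = exp (c * complex_of_real T)"
    using Ad_left_eigenvalue[OF eigen \<open>v \<noteq> 0\<close>] by blast
  have "v v* cmat B = 0"
    using vector_cmat_Bi[OF eigen, of B] assms(4) c(2) by simp
  moreover have "c \<in> resonant_spec A T"
  proof (rule ccontr)
    assume "c \<notin> resonant_spec A T"
    then have "v v* cmat A = c *s v"
      using Ad_left_eigenvector_nonresonant assms(2) c eigen by blast
    then show False
      using assms(1) \<open>v v* cmat B = 0\<close> \<open>v \<noteq> 0\<close> unfolding controllable_iff_hautus by blast
  qed
  ultimately show ?thesis using that c(2) by blast
qed

lemma vector_matrix_hcat_eq_0:
  fixes v :: "'a::comm_semiring_1^'n"
  shows "v v* hcat B1 B2 = 0 \<longleftrightarrow> v v* B1 = 0 \<and> v v* B2 = 0"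
proof -
  have l: "(v v* hcat B1 B2) $ Inl a = (v v* B1) $ a" for a
    by (simp add: vector_matrix_mult_def hcat_def)
  have r: "(v v* hcat B1 B2) $ Inr b = (v v* B2) $ b" for b
    by (simp add: vector_matrix_mult_def hcat_def)
  show ?thesis
    by (auto simp: vec_eq_iff l[symmetric] r[symmetric]) (metis sum.exhaust l r)
qed

lemma cmat_hcat: "cmat (hcat B1 B2) = hcat (cmat B1) (cmat B2)"
  by (simp add: cmat_def hcat_def vec_eq_iff split: sum.split)

lemma vcat_kernel: "vcat X Y *v v = 0 \<longleftrightarrow> X *v v = 0 \<and> Y *v v = 0"
proof -
  have l: "(vcat X Y *v v) $ Inl a = (X *v v) $ a" for a
    by (simp add: vcat_def matrix_vector_mult_def)
  have r: "(vcat X Y *v v) $ Inr b = (Y *v v) $ b" for b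
    by (simp add: vcat_def matrix_vector_mult_def)
  show ?thesis
    by (auto simp: vec_eq_iff l[symmetric] r[symmetric]) (metis sum.exhaust l r)
qed

lemma transpose_minus_mat_kernel:
  fixes M :: "'a::comm_ring_1^'n^'n"
  shows "(transpose M - mat c) *v v = 0 \<longleftrightarrow> v v* M = c *s v"
  by (simp add: matrix_vector_mult_diff_rdistrib matrix_vector_mat)

lemma stacked_kernel_eq_0_iff:
  fixes X :: "'a::comm_ring_1^'n^'n"
  shows "{v. vcat (transpose X - mat c) (vcat (transpose Y) (transpose Z)) *v v = 0} = {0} \<longleftrightarrow>
    (\<forall>v. v v* X = c *s v \<longrightarrow> v v* Y = 0 \<longrightarrow> v v* Z = 0 \<longrightarrow> v = 0)"
  by (auto simp: vcat_kernel transpose_minus_mat_kernel)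

theorem theorem1:
  fixes A :: "real^'n^'n" and B :: "real^'m^'n" and T :: real
  assumes "controllable A B" and "T > 0"
  shows "controllable (Ad A T) (hcat (Bd A B T) (Bi A B T)) \<longleftrightarrow>
    (\<forall>\<mu> \<in> {c \<in> spec A. \<exists>l::int. \<exists>\<gamma> \<in> spec A - {c}.
                 (c - \<gamma>) * complex_of_real T = 2 * \<i> * complex_of_real pi * of_int l}.
       {v :: complex^'n.
          vcat (transpose (cmat (Ad A T)) - mat (exp (\<mu> * complex_of_real T)))
               (vcat (transpose (cmat (Atil A T ** B))) (transpose (cmat B))) *v v = 0}
       = {0})"
  unfolding resonant_spec_def[symmetric] Bd_def[symmetric] stacked_kernel_eq_0_iff
    controllable_iff_hautus cmat_hcat vector_matrix_hcat_eq_0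
proof (intro iffI ballI allI impI)
  fix \<mu> v
  assume "\<forall>v z. v v* cmat (Ad A T) = z *s v \<longrightarrow>
      v v* cmat (Bd A B T) = 0 \<and> v v* cmat (Bi A B T) = 0 \<longrightarrow> v = 0"
    and eigen: "v v* cmat (Ad A T) = exp (\<mu> * complex_of_real T) *s v"
    and "v v* cmat (Bd A B T) = 0" and "v v* cmat B = 0"
  moreover have "v v* cmat (Bi A B T) = 0"
    using vector_cmat_Bi[OF eigen, of B] \<open>v v* cmat B = 0\<close> by simp
  ultimately show "v = 0" by blast
next
  fix v z
  assume resonant_kernels: "\<forall>\<mu>\<in>resonant_spec A T. \<forall>v.
      v v* cmat (Ad A T) = exp (\<mu> * complex_of_real T) *s v \<longrightarrow>
      v v* cmat (Bd A B T) = 0 \<longrightarrow> v v* cmat B = 0 \<longrightarrow> v = 0"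
    and eigen: "v v* cmat (Ad A T) = z *s v"
    and input: "v v* cmat (Bd A B T) = 0 \<and> v v* cmat (Bi A B T) = 0"
  show "v = 0"
  proof (rule ccontr)
    assume "v \<noteq> 0"
    with assms eigen input obtain \<mu> where
      "\<mu> \<in> resonant_spec A T" "z = exp (\<mu> * complex_of_real T)" "v v* cmat B = 0"
      by (elim left_eigenvector_annihilating_Bi_resonant) auto
    then show False using resonant_kernels eigen input \<open>v \<noteq> 0\<close> by blast
  qed
qed

end
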